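(* Let $\Pi$ be a closed subset of $S^1$ such that $S^1\setminus\Pi$ is a disjoint union of open intervals each of length less than $\pi$. Then for every planar convex body $K$ the following are equivalent: (1) $K=\bigcap_{t\in\Pi}H_K(t)$; (2) $\mathbf{n}(K)\subseteq\Pi$.
   Context: A planar convex body is a nonempty compact convex subset of $\mathbb{R}^2$ (possibly with empty interior). $S^1=\mathbb{R}/2\pi\mathbb{Z}$. For $t$ let $u_t=(\cos t,\sin t)$; $p_K(t)=\max_{p\in K}p\cdot u_t$; $H_K(t)=\{p:p\cdot u_t\le p_K(t)\}$ is the tangent half-plane. $\sigma_K$ is the surface area measure of $K$ on $S^1$ (Schneider's $S_1(K,\cdot)$), and $\mathbf{n}(K)$ is the support of $\sigma_K$. *)

theory Defs
  imports "HOL-Analysis.Analysis"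
begin

text \<open>Points of the plane are vectors in real^2.  Directions in S^1 = R/2piZ are
  represented by real numbers t (angles); subsets of S^1 by 2pi-periodic subsets of R.\<close>

definition convex_body :: "(real^2) set \<Rightarrow> bool" where
  "convex_body K \<longleftrightarrow> K \<noteq> {} \<and> compact K \<and> convex K"

definition udir :: "real \<Rightarrow> real^2" where
  "udir t = vector [cos t, sin t]"

definition support_fun :: "(real^2) set \<Rightarrow> real \<Rightarrow> real" where
  "support_fun K t = (SUP p\<in>K. p \<bullet> udir t)"

definition tangent_halfplane :: "(real^2) set \<Rightarrow> real \<Rightarrow> (real^2) set" where
  "tangent_halfplane K t = {p. p \<bullet> udir t \<le> support_fun K t}"

definition hausdorff1_pre :: "real \<Rightarrow> (real^2) set \<Rightarrow> ennreal" where
  "hausdorff1_pre \<delta> A = (INF C\<in>{C :: nat \<Rightarrow> (real^2) set.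
       A \<subseteq> (\<Union>i. C i) \<and> (\<forall>i. bounded (C i) \<and> diameter (C i) \<le> \<delta>)}.
       (\<Sum>i. ennreal (diameter (C i))))"

definition hausdorff1 :: "(real^2) set \<Rightarrow> ennreal" where
  "hausdorff1 A = (SUP \<delta>\<in>{0<..}. hausdorff1_pre \<delta> A)"

definition rev_sph_image :: "(real^2) set \<Rightarrow> real set \<Rightarrow> (real^2) set" where
  "rev_sph_image K \<omega> = {x\<in>K. \<exists>s\<in>\<omega>. x \<bullet> udir s = support_fun K s}"

definition surface_area_measure :: "(real^2) set \<Rightarrow> real set \<Rightarrow> ennreal" where
  "surface_area_measure K \<omega> = hausdorff1 (rev_sph_image K \<omega>)"

definition normals_supp :: "(real^2) set \<Rightarrow> real set" where
  "normals_supp K = {t. \<forall>\<epsilon>>0. surface_area_measure K {t - \<epsilon><..<t + \<epsilon>} > 0}"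

end

theory Submission
  imports Defs
begin

text \<open>
  (1) implies (2): a direction t outside Pi lies in a gap (a, b) of Pi shorter than pi. Every
  support point y of K for a direction of the gap also supports K in direction a, since otherwise
  y + m u(b - pi/2) would, for small m > 0, lie in every tangent half-plane with normal in Pi
  but not in K. Two directions at angle less than pi share at most one support point, so all
  directions of the gap have the same single support point and sigma_K vanishes on (a, b).

  (2) implies (1): if x lies in all these half-planes but not in K, the direction t from the
  nearest point p of K to x lies in a gap (a, b). As x is in the half-planes for a and b, p
  cannot support K in every direction of the gap, so some direction s of the gap has a support
  point other than p. The support sets for the directions between t and s sweep out a connected
  set joining two distinct points, which has positive length, so n(K) meets (a, b).
\<close>

section \<open>One-dimensional Hausdorff measure\<close>

definition delta_covers :: "real \<Rightarrow> (real^2) set \<Rightarrow> (nat \<Rightarrow> (real^2) set) set" where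
  "delta_covers \<delta> A = {C. A \<subseteq> (\<Union>i. C i) \<and> (\<forall>i. bounded (C i) \<and> diameter (C i) \<le> \<delta>)}"

lemma hausdorff1_pre_eq_INF_covers:
  "hausdorff1_pre \<delta> A = (INF C\<in>delta_covers \<delta> A. \<Sum>i. ennreal (diameter (C i)))"
  unfolding hausdorff1_pre_def delta_covers_def ..

lemma hausdorff1_eq_0_iff: "hausdorff1 A = 0 \<longleftrightarrow> (\<forall>\<delta>>0. hausdorff1_pre \<delta> A = 0)"
  unfolding hausdorff1_def bot_ennreal[symmetric] SUP_bot_conv by auto

lemma hausdorff1_mono:
  assumes "A \<subseteq> B"
  shows "hausdorff1 A \<le> hausdorff1 B"
proof -
  have "delta_covers \<delta> B \<subseteq> delta_covers \<delta> A" for \<delta>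
    using assms unfolding delta_covers_def by blast
  then have "hausdorff1_pre \<delta> A \<le> hausdorff1_pre \<delta> B" for \<delta>
    unfolding hausdorff1_pre_eq_INF_covers by (rule INF_superset_mono) simp
  then show ?thesis
    unfolding hausdorff1_def by (simp add: SUP_mono')
qed

lemma hausdorff1_subsingleton:
  assumes "A \<subseteq> {q}"
  shows "hausdorff1 A = 0"
  unfolding hausdorff1_eq_0_iff
proof (intro allI impI)
  fix \<delta> :: real
  assume "\<delta> > 0"
  define C where "C i = (if i = 0 then A else {})" for i :: nat
  have "bounded (C i) \<and> diameter (C i) = 0" for i
    using assms by (auto simp: C_def subset_singleton_iff)
  moreover have "A \<subseteq> (\<Union>i. C i)"
    by (metis C_def UN_upper UNIV_I)
  ultimately have "C \<in> delta_covers \<delta> A"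
    using \<open>\<delta> > 0\<close> by (simp add: delta_covers_def)
  then have "hausdorff1_pre \<delta> A \<le> (\<Sum>i. ennreal (diameter (C i)))"
    unfolding hausdorff1_pre_eq_INF_covers by (rule INF_lower)
  also have "\<dots> = 0"
    using \<open>\<And>i. bounded (C i) \<and> diameter (C i) = 0\<close> by simp
  finally show "hausdorff1_pre \<delta> A = 0"
    by simp
qed

lemma hausdorff1_pre_Un_le:
  assumes C: "C \<in> delta_covers \<delta> A" and D: "D \<in> delta_covers \<delta> B"
  shows "hausdorff1_pre \<delta> (A \<union> B)
           \<le> (\<Sum>i. ennreal (diameter (C i))) + (\<Sum>i. ennreal (diameter (D i)))"
proof -
  define E where "E i = (if even i then C (i div 2) else D (i div 2))" for i
  have CD_E: "C i = E (i * 2)" "D i = E (i * 2 + 1)" for i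
    by (simp_all add: E_def)
  have "(\<Union>i. C i) \<union> (\<Union>i. D i) \<subseteq> (\<Union>i. E i)"
    unfolding CD_E by blast
  moreover have "bounded (E i) \<and> diameter (E i) \<le> \<delta>" for i
    using C D by (simp add: E_def delta_covers_def)
  ultimately have "E \<in> delta_covers \<delta> (A \<union> B)"
    using C D unfolding delta_covers_def by blast
  then have "hausdorff1_pre \<delta> (A \<union> B) \<le> (\<Sum>i. ennreal (diameter (E i)))"
    unfolding hausdorff1_pre_eq_INF_covers by (rule INF_lower)
  also have "\<dots> = (\<Sum>n. ennreal (diameter (C n)) + ennreal (diameter (D n)))"
  proof -
    have "(\<lambda>n. \<Sum>i\<in>{n * 2..<n * 2 + 2}. ennreal (diameter (E i)))
            sums (\<Sum>i. ennreal (diameter (E i)))"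
      using sums_group[OF summable_sums[OF summableI], of 2] by simp
    moreover have "{n * 2..<n * 2 + 2} = {n * 2, n * 2 + 1}" for n :: nat
      by auto
    ultimately show ?thesis
      by (simp add: sums_iff CD_E)
  qed
  also have "\<dots> = (\<Sum>i. ennreal (diameter (C i))) + (\<Sum>i. ennreal (diameter (D i)))"
    by (simp add: suminf_add)
  finally show ?thesis .
qed

lemma hausdorff1_null_Un:
  assumes "hausdorff1 A = 0" and "hausdorff1 B = 0"
  shows "hausdorff1 (A \<union> B) = 0"
  unfolding hausdorff1_eq_0_iff
proof (intro allI impI)
  fix \<delta> :: real
  assume "\<delta> > 0"
  have small_cover: "\<exists>C\<in>delta_covers \<delta> X. (\<Sum>i. ennreal (diameter (C i))) < ennreal \<epsilon>"
    if "hausdorff1 X = 0" "\<epsilon> > 0" for X \<epsilon>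
  proof -
    have "hausdorff1_pre \<delta> X < ennreal \<epsilon>"
      using that \<open>\<delta> > 0\<close> by (simp add: hausdorff1_eq_0_iff)
    then show ?thesis
      unfolding hausdorff1_pre_eq_INF_covers by (simp add: INF_less_iff)
  qed
  have "hausdorff1_pre \<delta> (A \<union> B) \<le> 0 + ennreal \<epsilon>" if "\<epsilon> > 0" for \<epsilon> :: real
  proof -
    obtain C where C: "C \<in> delta_covers \<delta> A" "(\<Sum>i. ennreal (diameter (C i))) < ennreal (\<epsilon>/2)"
      using small_cover[OF assms(1), of "\<epsilon>/2"] \<open>\<epsilon> > 0\<close> by auto
    obtain D where D: "D \<in> delta_covers \<delta> B" "(\<Sum>i. ennreal (diameter (D i))) < ennreal (\<epsilon>/2)"
      using small_cover[OF assms(2), of "\<epsilon>/2"] \<open>\<epsilon> > 0\<close> by auto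
    have "hausdorff1_pre \<delta> (A \<union> B) \<le> ennreal (\<epsilon>/2) + ennreal (\<epsilon>/2)"
      using hausdorff1_pre_Un_le[OF C(1) D(1)] C(2) D(2)
      by (meson add_mono less_imp_le order_trans)
    also have "\<dots> = 0 + ennreal \<epsilon>"
      using \<open>\<epsilon> > 0\<close> by (simp flip: ennreal_plus)
    finally show ?thesis .
  qed
  then show "hausdorff1_pre \<delta> (A \<union> B) = 0"
    using ennreal_le_epsilon le_zero_eq by blast
qed

text \<open>Each C i projects into an interval of length 2 * diameter (C i); compare Lebesgue measures.\<close>

lemma interval_length_le_delta_cover:
  fixes A :: "(real^2) set" and e :: "real^2"
  assumes C: "C \<in> delta_covers \<delta> A" and e: "norm e = 1" and cd: "c \<le> d"
    and proj: "{c..d} \<subseteq> (\<lambda>z. z \<bullet> e) ` A"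
  shows "ennreal (d - c) \<le> 2 * (\<Sum>i. ennreal (diameter (C i)))"
proof -
  have diam: "bounded (C i)" "0 \<le> diameter (C i)" for i
    using C by (auto simp: delta_covers_def intro: diameter_ge_0)
  define z where "z i = (SOME z. z \<in> C i)" for i
  define I where
    "I i = (if C i = {} then {} else {z i \<bullet> e - diameter (C i) .. z i \<bullet> e + diameter (C i)})" for i
  have cover: "{c..d} \<subseteq> (\<Union>i. I i)"
  proof
    fix y
    assume "y \<in> {c..d}"
    then obtain w where w: "w \<in> A" "y = w \<bullet> e"
      using proj by auto
    then obtain i where wi: "w \<in> C i"
      using C by (auto simp: delta_covers_def)
    then have zi: "z i \<in> C i"
      unfolding z_def by (metis someI)
    have "\<bar>(w - z i) \<bullet> e\<bar> \<le> norm (w - z i)"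
      using Cauchy_Schwarz_ineq2[of "w - z i" e] e by simp
    also have "\<dots> \<le> diameter (C i)"
      using diam wi zi by (metis diameter_bounded_bound dist_norm)
    finally have "y \<in> I i"
      using w wi by (auto simp: I_def inner_diff_left)
    then show "y \<in> (\<Union>i. I i)"
      by blast
  qed
  have meas: "range I \<subseteq> sets lborel"
    by (auto simp: I_def)
  have "ennreal (d - c) = emeasure lborel {c..d}"
    using cd by simp
  also have "\<dots> \<le> emeasure lborel (\<Union>i. I i)"
    using cover meas by (intro emeasure_mono) auto
  also have "\<dots> \<le> (\<Sum>i. emeasure lborel (I i))"
    using meas by (rule emeasure_subadditive_countably)
  also have "\<dots> \<le> (\<Sum>i. 2 * ennreal (diameter (C i)))"
    using diam by (intro suminf_le) (auto simp: I_def ennreal_mult)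
  also have "\<dots> = 2 * (\<Sum>i. ennreal (diameter (C i)))"
    by simp
  finally show ?thesis .
qed

lemma hausdorff1_pos_if_projection_contains_interval:
  fixes A :: "(real^2) set" and e :: "real^2"
  assumes e: "norm e = 1" and cd: "c < d" and proj: "{c..d} \<subseteq> (\<lambda>z. z \<bullet> e) ` A"
  shows "0 < hausdorff1 A"
proof -
  have "ennreal ((d - c) / 2) \<le> hausdorff1_pre 1 A"
    unfolding hausdorff1_pre_eq_INF_covers
  proof (rule INF_greatest)
    fix C
    assume "C \<in> delta_covers 1 A"
    have "2 * ennreal ((d - c) / 2) = ennreal (d - c)"
      using cd by (simp flip: ennreal_mult' ennreal_numeral)
    then have "2 * ennreal ((d - c) / 2) \<le> 2 * (\<Sum>i. ennreal (diameter (C i)))"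
      using interval_length_le_delta_cover[OF \<open>C \<in> delta_covers 1 A\<close> e _ proj] cd by simp
    then show "ennreal ((d - c) / 2) \<le> (\<Sum>i. ennreal (diameter (C i)))"
      by (simp add: ennreal_mult_le_mult_iff)
  qed
  also have "\<dots> \<le> hausdorff1 A"
    unfolding hausdorff1_def by (rule SUP_upper) simp
  finally show ?thesis
    using cd by (simp add: order_less_le_trans[rotated])
qed

section \<open>Support functions and support sets\<close>

lemma inner_udir: "x \<bullet> udir t = x$1 * cos t + x$2 * sin t"
  unfolding udir_def inner_vec_def sum_2 by simp

lemma inner_udir_udir: "udir s \<bullet> udir t = cos (s - t)"
  unfolding inner_udir by (simp add: udir_def cos_diff)

lemma isCont_udir: "isCont udir t"
proof -
  have udir_axis: "udir = (\<lambda>t. cos t *\<^sub>R axis 1 1 + sin t *\<^sub>R axis 2 1)"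
    unfolding udir_def by (simp add: fun_eq_iff vec_eq_iff forall_2 axis_def)
  show ?thesis
    unfolding udir_axis by (intro continuous_intros)
qed

lemma udir_add_2pi_int: "udir (t + 2 * pi * of_int k) = udir t"
  unfolding udir_def by (simp add: cos_add sin_add)

lemma inner_udir_interpolation:
  "sin (b - a) * (x \<bullet> udir g) = sin (b - g) * (x \<bullet> udir a) + sin (g - a) * (x \<bullet> udir b)"
  unfolding inner_udir sin_diff by (simp add: algebra_simps)

lemma inner_udir_le_between:
  assumes "a < g" "g < b" "b - a < pi"
    and "x \<bullet> udir a \<le> y \<bullet> udir a" "x \<bullet> udir b \<le> y \<bullet> udir b"
  shows "x \<bullet> udir g \<le> y \<bullet> udir g"
proof -
  have sin_pos: "sin (b - a) > 0" "sin (b - g) > 0" "sin (g - a) > 0"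
    using assms(1-3) by (auto intro!: sin_gt_zero)
  have "sin (b - a) * (x \<bullet> udir g) = sin (b - g) * (x \<bullet> udir a) + sin (g - a) * (x \<bullet> udir b)"
    by (rule inner_udir_interpolation)
  also have "\<dots> \<le> sin (b - g) * (y \<bullet> udir a) + sin (g - a) * (y \<bullet> udir b)"
    using assms(4,5) sin_pos by (intro add_mono mult_left_mono) auto
  also have "\<dots> = sin (b - a) * (y \<bullet> udir g)"
    by (rule inner_udir_interpolation[symmetric])
  finally show ?thesis
    using sin_pos(1) by simp
qed

lemma eq_if_inner_udir_eq:
  assumes "sin (b - a) \<noteq> 0" "x \<bullet> udir a = y \<bullet> udir a" "x \<bullet> udir b = y \<bullet> udir b"
  shows "x = (y :: real^2)"
proof -
  have "(x - y) \<bullet> udir g = 0" for g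
    using inner_udir_interpolation[of b a "x - y" g] assms by (simp add: inner_diff_left)
  from this[of 0] this[of "pi/2"] show ?thesis
    by (simp add: inner_udir vec_eq_iff forall_2)
qed

lemma udir_polar:
  fixes n :: "real^2"
  obtains t where "n = norm n *\<^sub>R udir t"
proof (cases "n = 0")
  case False
  have norm2: "norm n ^ 2 = n$1 ^ 2 + n$2 ^ 2"
    unfolding power2_norm_eq_inner inner_vec_def sum_2 by (simp add: power2_eq_square)
  have "(n$1 / norm n) ^ 2 + (n$2 / norm n) ^ 2 = (n$1 ^ 2 + n$2 ^ 2) / norm n ^ 2"
    by (simp add: power_divide add_divide_distrib)
  also have "\<dots> = 1"
    using False by (simp flip: norm2)
  finally obtain t where "n$1 / norm n = cos t" "n$2 / norm n = sin t"
    by (rule sincos_total_2pi)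
  then have "n$1 = norm n * cos t" "n$2 = norm n * sin t"
    using False by (simp_all add: divide_eq_eq mult.commute)
  then have "n = norm n *\<^sub>R udir t"
    by (simp add: udir_def vec_eq_iff forall_2)
  then show ?thesis
    by (rule that)
qed (simp add: that)

context
  fixes K :: "(real^2) set"
  assumes K: "convex_body K"
begin

lemma support_fun_ge: "x \<in> K \<Longrightarrow> x \<bullet> udir t \<le> support_fun K t"
  and support_fun_attained: "\<exists>y\<in>K. y \<bullet> udir t = support_fun K t"
  and support_fun_le: "(\<And>x. x \<in> K \<Longrightarrow> x \<bullet> udir t \<le> c) \<Longrightarrow> support_fun K t \<le> c"
proof -
  have "compact K" "K \<noteq> {}"
    using K by (auto simp: convex_body_def)
  moreover have "continuous_on K (\<lambda>x. x \<bullet> udir t)"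
    by (intro continuous_intros)
  ultimately obtain y where y: "y \<in> K" "\<And>x. x \<in> K \<Longrightarrow> x \<bullet> udir t \<le> y \<bullet> udir t"
    by (metis continuous_attains_sup)
  have "support_fun K t = y \<bullet> udir t"
    unfolding support_fun_def using y by (intro cSup_eq_maximum) auto
  with y show "x \<in> K \<Longrightarrow> x \<bullet> udir t \<le> support_fun K t"
    and "\<exists>y\<in>K. y \<bullet> udir t = support_fun K t"
    and "(\<And>x. x \<in> K \<Longrightarrow> x \<bullet> udir t \<le> c) \<Longrightarrow> support_fun K t \<le> c"
    by auto
qed

lemma isCont_support_fun: "isCont (support_fun K) t"
proof -
  obtain B where B: "\<And>x. x \<in> K \<Longrightarrow> norm x \<le> B"
    using K unfolding convex_body_def by (meson bounded_iff compact_imp_bounded)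
  have lipschitz: "support_fun K s \<le> support_fun K r + B * norm (udir s - udir r)" for s r
  proof (rule support_fun_le)
    fix x
    assume x: "x \<in> K"
    have "x \<bullet> (udir s - udir r) \<le> B * norm (udir s - udir r)"
      using norm_cauchy_schwarz[of x "udir s - udir r"] B[OF x]
      by (meson mult_right_mono norm_ge_zero order_trans)
    then show "x \<bullet> udir s \<le> support_fun K r + B * norm (udir s - udir r)"
      using support_fun_ge[OF x, of r] by (simp add: inner_diff_right)
  qed
  have "((\<lambda>s. support_fun K s - support_fun K t) \<longlongrightarrow> 0) (at t)"
  proof (rule Lim_null_comparison)
    have "\<bar>support_fun K s - support_fun K t\<bar> \<le> B * norm (udir s - udir t)" for s
      using lipschitz[of s t] lipschitz[of t s, unfolded norm_minus_commute[of "udir t"]]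
      by linarith
    then show "\<forall>\<^sub>F s in at t. norm (support_fun K s - support_fun K t) \<le> B * norm (udir s - udir t)"
      by simp
    have "((\<lambda>s. B * norm (udir s - udir t)) \<longlongrightarrow> B * norm (udir t - udir t)) (at t)"
      using isCont_udir[of t] unfolding isCont_def by (intro tendsto_intros)
    then show "((\<lambda>s. B * norm (udir s - udir t)) \<longlongrightarrow> 0) (at t)"
      by simp
  qed
  then show ?thesis
    unfolding isCont_def by (simp add: LIM_zero_iff)
qed

lemma continuous_on_support_fun: "continuous_on S (support_fun K)"
  using isCont_support_fun by (simp add: continuous_at_imp_continuous_on)

end

lemma support_fun_add_2pi_int: "support_fun K (t + 2 * pi * of_int k) = support_fun K t"
  unfolding support_fun_def udir_add_2pi_int ..

lemma tangent_halfplane_add_2pi_int: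
  "tangent_halfplane K (t + 2 * pi * of_int k) = tangent_halfplane K t"
  unfolding tangent_halfplane_def udir_add_2pi_int support_fun_add_2pi_int ..

lemma subset_Inter_tangent_halfplane:
  "convex_body K \<Longrightarrow> K \<subseteq> (\<Inter>t\<in>S. tangent_halfplane K t)"
  using support_fun_ge by (auto simp: tangent_halfplane_def)

definition support_set :: "(real^2) set \<Rightarrow> real \<Rightarrow> (real^2) set" where
  "support_set K t = {x\<in>K. x \<bullet> udir t = support_fun K t}"

lemma rev_sph_image_eq_UN_support_set: "rev_sph_image K \<omega> = (\<Union>s\<in>\<omega>. support_set K s)"
  unfolding rev_sph_image_def support_set_def by auto

lemma surface_area_measure_mono:
  "\<omega> \<subseteq> \<omega>' \<Longrightarrow> surface_area_measure K \<omega> \<le> surface_area_measure K \<omega>'"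
  unfolding surface_area_measure_def rev_sph_image_eq_UN_support_set
  by (intro hausdorff1_mono) blast

lemma support_set_add_2pi: "support_set K (t + 2 * pi) = support_set K t"
  using udir_add_2pi_int[of t 1] support_fun_add_2pi_int[of K t 1]
  by (simp add: support_set_def)

context
  fixes K :: "(real^2) set"
  assumes K: "convex_body K"
begin

lemma support_set_nonempty: "support_set K t \<noteq> {}"
  using support_fun_attained[OF K] by (auto simp: support_set_def)

lemma convex_support_set: "convex (support_set K t)"
proof -
  have "support_set K t = K \<inter> {x. udir t \<bullet> x = support_fun K t}"
    by (auto simp: support_set_def inner_commute)
  then show ?thesis
    using K by (simp add: convex_body_def convex_Int convex_hyperplane)
qed

lemma support_set_between:
  assumes "a < g" "g < b" "b - a < pi"
    and "y \<in> support_set K a" "y \<in> support_set K b"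
  shows "y \<in> support_set K g"
proof -
  have "x \<bullet> udir g \<le> y \<bullet> udir g" if "x \<in> K" for x
    using assms support_fun_ge[OF K that]
    by (intro inner_udir_le_between[OF assms(1-3)]) (auto simp: support_set_def)
  then have "support_fun K g \<le> y \<bullet> udir g"
    by (rule support_fun_le[OF K])
  moreover have "y \<in> K"
    using assms(4) by (simp add: support_set_def)
  ultimately show ?thesis
    using support_fun_ge[OF K, of y g] by (simp add: support_set_def)
qed

lemma closed_directions_meeting:
  assumes "closed P"
  shows "closed {s. \<exists>y\<in>support_set K s. y \<in> P}"
proof -
  let ?T = "{p :: (real^2) \<times> real. fst p \<bullet> udir (snd p) = support_fun K (snd p)} \<inter> (P \<times> UNIV)"
  have "continuous_on UNIV (\<lambda>p :: (real^2) \<times> real. support_fun K (snd p))"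
    by (rule continuous_on_compose2[OF continuous_on_support_fun[OF K] continuous_on_snd]) auto
  moreover have "continuous_on UNIV (\<lambda>p :: (real^2) \<times> real. fst p \<bullet> udir (snd p))"
    unfolding inner_udir by (intro continuous_intros)
  ultimately have "closed ?T"
    using assms by (intro closed_Int closed_Collect_eq closed_Times) auto
  moreover have "compact K"
    using K by (simp add: convex_body_def)
  ultimately have "closed {s. \<exists>y. y \<in> K \<and> (y, s) \<in> ?T}"
    by (intro closed_compact_projection)
  moreover have "{s. \<exists>y. y \<in> K \<and> (y, s) \<in> ?T} = {s. \<exists>y\<in>support_set K s. y \<in> P}"
    by (auto simp: support_set_def)
  ultimately show ?thesis
    by simp
qed

lemma support_sets_intermediate_value:
  assumes "al \<le> be" "y1 \<in> support_set K al" "y2 \<in> support_set K be"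
    and "y1 \<bullet> e \<le> c" "c \<le> y2 \<bullet> e"
  shows "\<exists>s\<in>{al..be}. \<exists>y\<in>support_set K s. y \<bullet> e = c"
proof -
  define A1 where "A1 = {s. \<exists>y\<in>support_set K s. y \<in> {z. z \<bullet> e \<le> c}}"
  define A2 where "A2 = {s. \<exists>y\<in>support_set K s. y \<in> {z. c \<le> z \<bullet> e}}"
  have "closed A1" "closed A2"
    unfolding A1_def A2_def
    by (intro closed_directions_meeting closed_Collect_le continuous_intros)+
  moreover have "{al..be} \<subseteq> A1 \<union> A2"
  proof
    fix s
    obtain y where "y \<in> support_set K s"
      using support_set_nonempty by blast
    then show "s \<in> A1 \<union> A2"
      using linorder_linear[of "y \<bullet> e" c] by (auto simp: A1_def A2_def)
  qed
  moreover have "A1 \<inter> {al..be} \<noteq> {}" "A2 \<inter> {al..be} \<noteq> {}"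
    using assms by (auto simp: A1_def A2_def)
  ultimately have "A1 \<inter> A2 \<inter> {al..be} \<noteq> {}"
    using connected_Icc[of al be] unfolding connected_closed by blast
  then obtain s where s: "s \<in> {al..be}" "s \<in> A1" "s \<in> A2"
    by blast
  then obtain z1 z2 where
    z: "z1 \<in> support_set K s" "z2 \<in> support_set K s" "z1 \<bullet> e \<le> c" "c \<le> z2 \<bullet> e"
    by (auto simp: A1_def A2_def)
  have "is_interval ((\<lambda>z. z \<bullet> e) ` support_set K s)"
    unfolding is_interval_convex_1
    by (rule convex_linear_image[OF bounded_linear.linear[OF bounded_linear_inner_left] convex_support_set])
  then have "c \<in> (\<lambda>z. z \<bullet> e) ` support_set K s"
    using z by (rule_tac mem_is_interval_1_I[of _ "z1 \<bullet> e" "z2 \<bullet> e"]) auto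
  then show ?thesis
    using s by blast
qed

text \<open>The nearest point of K to an outside point x is a support point in the direction of x.\<close>

lemma separating_support_direction:
  assumes x: "x \<notin> K"
  obtains t p where "p \<in> support_set K t" "support_fun K t < x \<bullet> udir t"
proof -
  have "closed K" "convex K" "K \<noteq> {}"
    using K by (auto simp: convex_body_def compact_imp_closed)
  define p where "p = closest_point K x"
  have p: "p \<in> K"
    unfolding p_def by (rule closest_point_in_set) fact+
  obtain t where t: "x - p = norm (x - p) *\<^sub>R udir t"
    by (rule udir_polar)
  have pos: "norm (x - p) > 0"
    using p x by auto
  have "z \<bullet> udir t \<le> p \<bullet> udir t" if "z \<in> K" for z
  proof -
    have "(x - p) \<bullet> (z - p) \<le> 0"
      unfolding p_def by (rule closest_point_dot) fact+
    then have "norm (x - p) * (udir t \<bullet> (z - p)) \<le> 0"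
      by (subst (asm) t) simp
    then show ?thesis
      using pos by (simp add: mult_le_0_iff inner_diff_right inner_commute)
  qed
  then have "support_fun K t = p \<bullet> udir t"
    using support_fun_le[OF K] support_fun_ge[OF K p] by (meson order_antisym)
  moreover have "x \<bullet> udir t = p \<bullet> udir t + norm (x - p)"
  proof -
    have "(x - p) \<bullet> udir t = norm (x - p)"
      by (subst t) (simp add: inner_udir_udir)
    then show ?thesis
      by (simp add: inner_diff_left)
  qed
  ultimately show ?thesis
    using that[of p t] p pos by (simp add: support_set_def)
qed

end

section \<open>Gaps of the direction set\<close>

definition short_gap :: "real set \<Rightarrow> real \<Rightarrow> real \<Rightarrow> bool" where
  "short_gap S a b \<longleftrightarrow> a \<in> S \<and> b \<in> S \<and> a < b \<and> b - a < pi \<and> {a<..<b} \<inter> S = {}"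

lemma open_interval_eq_Inf_Sup:
  fixes C :: "real set"
  assumes "open C" "is_interval C" "bounded C" "C \<noteq> {}"
  shows "C = {Inf C<..<Sup C}"
proof
  have bdd: "bdd_below C" "bdd_above C"
    using \<open>bounded C\<close> by (auto simp: bounded_imp_bdd_below bounded_imp_bdd_above)
  have "Inf C \<notin> C"
    using \<open>open C\<close> bdd by (intro Inf_notin_open[of _ "Inf C - 1"]) (auto dest: cInf_lower[of _ C])
  moreover have "Sup C \<notin> C"
    using \<open>open C\<close> bdd by (intro Sup_notin_open[of _ "Sup C + 1"]) (auto dest: cSup_upper[of _ C])
  ultimately show "C \<subseteq> {Inf C<..<Sup C}"
  proof (intro subsetI)
    fix x
    assume "x \<in> C"
    then have "Inf C \<le> x" "x \<le> Sup C"
      using bdd by (auto intro: cInf_lower cSup_upper)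
    with \<open>x \<in> C\<close> \<open>Inf C \<notin> C\<close> \<open>Sup C \<notin> C\<close> show "x \<in> {Inf C<..<Sup C}"
      by (auto simp: order_le_less)
  qed
  show "{Inf C<..<Sup C} \<subseteq> C"
  proof
    fix s
    assume "s \<in> {Inf C<..<Sup C}"
    then obtain c1 c2 where "c1 \<in> C" "c1 < s" "c2 \<in> C" "s < c2"
      using cInf_less_iff[OF \<open>C \<noteq> {}\<close> bdd(1)] less_cSup_iff[OF \<open>C \<noteq> {}\<close> bdd(2)] by auto
    then show "s \<in> C"
      using \<open>is_interval C\<close> unfolding is_interval_1 by (meson less_imp_le)
  qed
qed

text \<open>The endpoints of the component of -S containing t lie in its closure but not in it,
  hence in the frontier of S.\<close>

lemma short_gap_around:
  fixes S :: "real set"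
  assumes "closed S" and comp: "\<forall>C \<in> components (- S). bounded C \<and> Sup C - Inf C < pi"
    and "t \<notin> S"
  obtains a b where "short_gap S a b" "a < t" "t < b"
proof -
  define C where "C = connected_component_set (- S) t"
  have "C \<in> components (- S)"
    using \<open>t \<notin> S\<close> unfolding C_def by (simp add: componentsI)
  then have "bounded C" and len: "Sup C - Inf C < pi"
    using comp by auto
  have "open C"
    unfolding C_def using \<open>closed S\<close> by (intro open_connected_component) auto
  have "t \<in> C" "C \<subseteq> - S" "is_interval C"
    unfolding C_def using \<open>t \<notin> S\<close> is_interval_connected_1
    by (auto simp: connected_component_subset)
  then have "C = {Inf C<..<Sup C}"
    using \<open>open C\<close> \<open>bounded C\<close> by (intro open_interval_eq_Inf_Sup) auto
  then obtain a b where C: "C = {a<..<b}" and "b - a < pi"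
    using len by blast
  then have "a < t" "t < b"
    using \<open>t \<in> C\<close> by auto
  have "frontier C \<subseteq> S"
    using frontier_of_connected_component_subset[of "- S" t] frontier_subset_closed[OF \<open>closed S\<close>]
    unfolding C_def by simp
  moreover have "frontier C = {a, b}"
    using \<open>a < t\<close> \<open>t < b\<close> unfolding C frontier_def
    by (auto simp: interior_open closure_greaterThanLessThan)
  ultimately have "short_gap S a b"
    using \<open>a < t\<close> \<open>t < b\<close> \<open>b - a < pi\<close> \<open>C \<subseteq> - S\<close> unfolding C short_gap_def by auto
  then show ?thesis
    using that \<open>a < t\<close> \<open>t < b\<close> by blast
qed

lemma periodic_add_2pi_int:
  assumes per: "\<forall>t. t \<in> S \<longleftrightarrow> t + 2 * pi \<in> S" and "t \<in> S"
  shows "t + 2 * pi * of_int k \<in> S"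
proof (induction k rule: int_induct[where k = 0])
  case base
  then show ?case
    using \<open>t \<in> S\<close> by simp
next
  case (step1 i)
  then show ?case
    using per[rule_format, of "t + 2 * pi * of_int i"] by (simp add: algebra_simps)
next
  case (step2 i)
  then show ?case
    using per[rule_format, of "t + 2 * pi * of_int (i - 1)"] by (simp add: algebra_simps)
qed

lemma add_2pi_int_in_period: "t + 2 * pi * of_int (- \<lfloor>(t - c) / (2 * pi)\<rfloor>) \<in> {c..<c + 2 * pi}"
  using floor_divide_lower[of "2 * pi" "t - c"] floor_divide_upper[of "2 * pi" "t - c"]
  by (simp add: algebra_simps)

lemma Inter_tangent_halfplane_one_period:
  assumes per: "\<forall>t. t \<in> S \<longleftrightarrow> t + 2 * pi \<in> S"
  shows "(\<Inter>t\<in>S. tangent_halfplane K t) = (\<Inter>t\<in>S \<inter> {c..<c + 2 * pi}. tangent_halfplane K t)"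
proof
  show "(\<Inter>t\<in>S \<inter> {c..<c + 2 * pi}. tangent_halfplane K t) \<subseteq> (\<Inter>t\<in>S. tangent_halfplane K t)"
  proof (intro INT_greatest)
    fix t
    assume "t \<in> S"
    define t' where "t' = t + 2 * pi * of_int (- \<lfloor>(t - c) / (2 * pi)\<rfloor>)"
    have "t' \<in> S \<inter> {c..<c + 2 * pi}"
      unfolding t'_def using periodic_add_2pi_int[OF per \<open>t \<in> S\<close>] add_2pi_int_in_period by blast
    then have "(\<Inter>t\<in>S \<inter> {c..<c + 2 * pi}. tangent_halfplane K t) \<subseteq> tangent_halfplane K t'"
      by (rule INT_lower)
    then show "(\<Inter>t\<in>S \<inter> {c..<c + 2 * pi}. tangent_halfplane K t) \<subseteq> tangent_halfplane K t"
      unfolding t'_def tangent_halfplane_add_2pi_int .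
  qed
qed blast

lemma short_gap_next_period:
  assumes per: "\<forall>t. t \<in> S \<longleftrightarrow> t + 2 * pi \<in> S" and gap: "short_gap S a b"
    and t: "t \<in> S" "t < b + 2 * pi"
  shows "t \<le> a + 2 * pi"
proof (rule ccontr)
  assume "\<not> t \<le> a + 2 * pi"
  then have "t - 2 * pi \<in> {a<..<b}"
    using t by auto
  moreover have "t - 2 * pi \<in> S"
    using per t by (metis diff_add_cancel)
  ultimately show False
    using gap by (auto simp: short_gap_def)
qed

lemma support_margin_beyond_gap:
  assumes K: "convex_body K" and "closed S" and gap: "short_gap S a b"
    and s: "a < s" "s < b" and y: "y \<in> support_set K s" and ya: "y \<notin> support_set K a"
  obtains m where "0 < m" "\<And>t. t \<in> S \<inter> {b + pi .. a + 2 * pi} \<Longrightarrow> y \<bullet> udir t + m \<le> support_fun K t"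
proof -
  define T where "T = S \<inter> {b + pi .. a + 2 * pi}"
  have yK: "y \<in> K"
    using y by (simp add: support_set_def)
  have "y \<notin> support_set K t" if "t \<in> T" for t
  proof
    assume yt: "y \<in> support_set K t"
    have "y \<in> support_set K (a + 2 * pi)"
    proof (cases "t = a + 2 * pi")
      case False
      then have "t < a + 2 * pi" "a + 2 * pi < s + 2 * pi" "s + 2 * pi - t < pi"
        using that s gap by (auto simp: T_def short_gap_def)
      moreover have "y \<in> support_set K (s + 2 * pi)"
        using y by (simp add: support_set_add_2pi)
      ultimately show ?thesis
        using support_set_between[OF K _ _ _ yt] by blast
    qed (use yt in simp)
    then show False
      using ya by (simp add: support_set_add_2pi)
  qed
  then have inside: "0 < support_fun K t - y \<bullet> udir t" if "t \<in> T" for t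
    using that support_fun_ge[OF K yK, of t] yK by (force simp: support_set_def)
  have "compact T"
    unfolding T_def using \<open>closed S\<close> by (intro closed_Int_compact) auto
  moreover have "continuous_on T (\<lambda>t. support_fun K t - y \<bullet> udir t)"
    unfolding inner_udir by (intro continuous_intros continuous_on_support_fun[OF K])
  ultimately obtain m where "0 < m" and m: "\<forall>t\<in>T. m \<le> norm (support_fun K t - y \<bullet> udir t)"
    using brouwer_compactness_lemma[of T "\<lambda>t. support_fun K t - y \<bullet> udir t"] inside
    by (metis less_irrefl)
  moreover have "y \<bullet> udir t + m \<le> support_fun K t" if "t \<in> T" for t
    using m[rule_format, OF that] inside[OF that] by (simp add: abs_of_pos)
  ultimately show ?thesis
    using that unfolding T_def by blast
qed

text \<open>If y supported K in a direction s of the gap but not in the direction a, the point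
  y + m u, where u has angle b - pi/2, would still lie in every tangent half-plane with normal
  in S for small m > 0: normals in [b, b + pi] see u non-positively, and on the rest
  [b + pi, a + 2 pi] of a period y keeps a positive margin. But u points strictly outward in
  direction s.\<close>

lemma support_set_gap_left_endpoint:
  assumes K: "convex_body K" and "closed S" and per: "\<forall>t. t \<in> S \<longleftrightarrow> t + 2 * pi \<in> S"
    and eq: "K = (\<Inter>t\<in>S. tangent_halfplane K t)"
    and gap: "short_gap S a b" and s: "a < s" "s < b" and y: "y \<in> support_set K s"
  shows "y \<in> support_set K a"
proof (rule ccontr)
  assume "y \<notin> support_set K a"
  then obtain m where m: "0 < m"
    and margin: "\<And>t. t \<in> S \<inter> {b + pi .. a + 2 * pi} \<Longrightarrow> y \<bullet> udir t + m \<le> support_fun K t"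
    using support_margin_beyond_gap[OF K \<open>closed S\<close> gap s y] by blast
  have yK: "y \<in> K"
    using y by (simp add: support_set_def)
  define y' where "y' = y + m *\<^sub>R udir (b - pi / 2)"
  have y'_inner: "y' \<bullet> udir t = y \<bullet> udir t + m * sin (b - t)" for t
    by (simp add: y'_def inner_add_left inner_udir_udir cos_diff sin_diff)
  have "y' \<bullet> udir t \<le> support_fun K t" if t: "t \<in> S" "b \<le> t" "t < b + 2 * pi" for t
  proof (cases "t \<le> b + pi")
    case True
    then have "0 \<le> sin (t - b)"
      using t by (intro sin_ge_zero) auto
    then have "sin (b - t) \<le> 0"
      by (metis minus_diff_eq neg_le_0_iff_le sin_minus)
    then show ?thesis
      using y'_inner[of t] m support_fun_ge[OF K yK, of t] by (smt (verit) mult_nonneg_nonpos)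
  next
    case False
    then have "y \<bullet> udir t + m \<le> support_fun K t"
      using t short_gap_next_period[OF per gap] by (intro margin) auto
    then show ?thesis
      using y'_inner[of t] m sin_le_one[of "b - t"] by (smt (verit) mult_left_le)
  qed
  then have "y' \<in> K"
    using eq Inter_tangent_halfplane_one_period[OF per, of K b]
    by (auto simp: tangent_halfplane_def)
  then have "y' \<bullet> udir s \<le> y \<bullet> udir s"
    using support_fun_ge[OF K] y by (simp add: support_set_def)
  moreover have "0 < m * sin (b - s)"
    using m s gap sin_gt_zero[of "b - s"] by (simp add: short_gap_def)
  ultimately show False
    using y'_inner[of s] by simp
qed

lemma support_sets_in_gap_eq:
  assumes K: "convex_body K" and "closed S" and per: "\<forall>t. t \<in> S \<longleftrightarrow> t + 2 * pi \<in> S"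
    and eq: "K = (\<Inter>t\<in>S. tangent_halfplane K t)" and gap: "short_gap S a b"
    and s: "s1 \<in> {a<..<b}" "s2 \<in> {a<..<b}"
    and y: "y1 \<in> support_set K s1" "y2 \<in> support_set K s2"
  shows "y1 = y2"
proof -
  have ordered: "y1 = y2"
    if "a < s1" "s1 \<le> s2" "s2 < b" "y1 \<in> support_set K s1" "y2 \<in> support_set K s2" for s1 s2 y1 y2
  proof -
    have "b - a < pi"
      using gap by (simp add: short_gap_def)
    have "s1 < b" "a < s2"
      using that by linarith+
    then have "y1 \<in> support_set K a" "y2 \<in> support_set K a"
      using that support_set_gap_left_endpoint[OF assms(1-5)] by blast+
    moreover have "y2 \<in> support_set K s1"
    proof (cases "s1 = s2")
      case False
      then show ?thesis
        using that \<open>b - a < pi\<close> \<open>y2 \<in> support_set K a\<close>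
        by (intro support_set_between[OF K, of a s1 s2]) auto
    qed (use that in simp)
    moreover have "sin (s1 - a) \<noteq> 0"
      using that \<open>b - a < pi\<close> sin_gt_zero[of "s1 - a"] by auto
    ultimately show ?thesis
      using that by (intro eq_if_inner_udir_eq[of s1 a]) (auto simp: support_set_def)
  qed
  show ?thesis
    using s y ordered[of s1 s2 y1 y2] ordered[of s2 s1 y2 y1] by (cases "s1 \<le> s2") auto
qed

lemma surface_area_measure_gap:
  assumes "convex_body K" "closed S" "\<forall>t. t \<in> S \<longleftrightarrow> t + 2 * pi \<in> S"
    and "K = (\<Inter>t\<in>S. tangent_halfplane K t)" "short_gap S a b"
  shows "surface_area_measure K {a<..<b} = 0"
proof (cases "rev_sph_image K {a<..<b} = {}")
  case False
  then obtain y where "y \<in> rev_sph_image K {a<..<b}"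
    by blast
  then have "rev_sph_image K {a<..<b} \<subseteq> {y}"
    using support_sets_in_gap_eq[OF assms] by (auto simp: rev_sph_image_eq_UN_support_set)
  then show ?thesis
    unfolding surface_area_measure_def by (rule hausdorff1_subsingleton)
qed (simp add: surface_area_measure_def hausdorff1_subsingleton)

lemma normals_supp_meets_if_hausdorff1_pos:
  assumes "al \<le> be" and pos: "0 < hausdorff1 (rev_sph_image K {al..be})"
  shows "\<exists>t\<in>{al..be}. t \<in> normals_supp K"
proof (rule ccontr)
  assume no: "\<not> (\<exists>t\<in>{al..be}. t \<in> normals_supp K)"
  have "hausdorff1 (rev_sph_image K {al..be}) = 0"
    using \<open>al \<le> be\<close>
  proof (induction rule: Bolzano)
    case (trans a b c)
    have "{a..c} = {a..b} \<union> {b..c}"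
      using trans.hyps by auto
    then have "rev_sph_image K {a..c} = rev_sph_image K {a..b} \<union> rev_sph_image K {b..c}"
      by (simp add: rev_sph_image_eq_UN_support_set)
    then show ?case
      using trans.IH by (simp add: hausdorff1_null_Un)
  next
    case (local x)
    then have "x \<notin> normals_supp K"
      using no by auto
    then obtain d where d: "0 < d" "surface_area_measure K {x - d<..<x + d} = 0"
      unfolding normals_supp_def by (auto simp: not_less)
    show ?case
    proof (intro exI[of _ d] conjI allI impI)
      fix a b
      assume "a \<le> x \<and> x \<le> b \<and> b - a < d"
      then have "surface_area_measure K {a..b} \<le> surface_area_measure K {x - d<..<x + d}"
        by (intro surface_area_measure_mono) auto
      then show "hausdorff1 (rev_sph_image K {a..b}) = 0"
        using d(2) by (simp add: surface_area_measure_def)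
    qed (rule d(1))
  qed
  then show False
    using pos by simp
qed

lemma normals_supp_between_support_points:
  assumes K: "convex_body K" and y: "y1 \<in> support_set K s1" "y2 \<in> support_set K s2" "y1 \<noteq> y2"
  obtains t where "t \<in> normals_supp K" "min s1 s2 \<le> t" "t \<le> max s1 s2"
proof -
  have ordered: "\<exists>t\<in>{al..be}. t \<in> normals_supp K"
    if "al \<le> be" "z1 \<in> support_set K al" "z2 \<in> support_set K be" "z1 \<noteq> z2" for al be z1 z2
  proof (rule normals_supp_meets_if_hausdorff1_pos[OF \<open>al \<le> be\<close>])
    define e where "e = sgn (z2 - z1)"
    have "norm e = 1"
      using that by (simp add: e_def norm_sgn)
    have "(z2 - z1) \<bullet> e = norm (z2 - z1)"
      using that(4)
      by (simp add: e_def sgn_div_norm power2_norm_eq_inner[symmetric] power2_eq_square divide_inverse)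
    moreover have "0 < norm (z2 - z1)"
      using that(4) by simp
    ultimately have "z1 \<bullet> e < z2 \<bullet> e"
      unfolding inner_diff_left by linarith
    moreover have "{z1 \<bullet> e .. z2 \<bullet> e} \<subseteq> (\<lambda>z. z \<bullet> e) ` rev_sph_image K {al..be}"
      using support_sets_intermediate_value[OF K that(1-3)]
      by (fastforce simp: rev_sph_image_eq_UN_support_set)
    ultimately show "0 < hausdorff1 (rev_sph_image K {al..be})"
      by (rule hausdorff1_pos_if_projection_contains_interval[OF \<open>norm e = 1\<close>])
  qed
  show ?thesis
    using ordered[of s1 s2 y1 y2] ordered[of s2 s1 y2 y1] y that
    by (cases "s1 \<le> s2") auto
qed

text \<open>If a point p of K supported K in every direction strictly between a and b, then by
  continuity it would support K in the directions a and b, and every point of the two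
  tangent half-planes would lie in the tangent half-plane of any direction in between.\<close>

lemma ex_direction_not_supported_by:
  assumes K: "convex_body K" and "a < t" "t < b" "b - a < pi" and "p \<in> K"
    and x: "x \<in> tangent_halfplane K a" "x \<in> tangent_halfplane K b" "x \<notin> tangent_halfplane K t"
  shows "\<exists>s\<in>{a<..<b}. p \<notin> support_set K s"
proof (rule ccontr)
  assume "\<not> ?thesis"
  then have "{a<..<b} \<subseteq> {s. \<exists>y\<in>support_set K s. y \<in> {p}}"
    by auto
  moreover have "closed {s. \<exists>y\<in>support_set K s. y \<in> {p}}"
    using K by (intro closed_directions_meeting) auto
  ultimately have "closure {a<..<b} \<subseteq> {s. \<exists>y\<in>support_set K s. y \<in> {p}}"
    by (rule closure_minimal)
  moreover have "a \<in> closure {a<..<b}" "b \<in> closure {a<..<b}"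
    using \<open>a < t\<close> \<open>t < b\<close> by auto
  ultimately have "p \<in> support_set K a" "p \<in> support_set K b"
    by auto
  then have "x \<bullet> udir t \<le> p \<bullet> udir t"
    using x by (intro inner_udir_le_between[OF assms(2-4)]) (auto simp: support_set_def tangent_halfplane_def)
  then show False
    using x(3) support_fun_ge[OF K \<open>p \<in> K\<close>, of t] by (simp add: tangent_halfplane_def)
qed

lemma Inter_tangent_halfplane_subset:
  assumes K: "convex_body K" and "closed S"
    and comp: "\<forall>C \<in> components (- S). bounded C \<and> Sup C - Inf C < pi"
    and normals: "normals_supp K \<subseteq> S"
  shows "(\<Inter>t\<in>S. tangent_halfplane K t) \<subseteq> K"
proof
  fix x
  assume x: "x \<in> (\<Inter>t\<in>S. tangent_halfplane K t)"
  show "x \<in> K"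
  proof (rule ccontr)
    assume "x \<notin> K"
    then obtain t p where p: "p \<in> support_set K t" and t: "support_fun K t < x \<bullet> udir t"
      using separating_support_direction[OF K] by blast
    then have "t \<notin> S"
      using x by (auto simp: tangent_halfplane_def)
    then obtain a b where gap: "short_gap S a b" "a < t" "t < b"
      using short_gap_around[OF \<open>closed S\<close> comp] by blast
    then have "x \<in> tangent_halfplane K a" "x \<in> tangent_halfplane K b" "b - a < pi"
      using x by (auto simp: short_gap_def)
    then obtain s where s: "a < s" "s < b" "p \<notin> support_set K s"
      using ex_direction_not_supported_by[OF K \<open>a < t\<close> \<open>t < b\<close>] p t
      by (force simp: support_set_def tangent_halfplane_def)
    obtain y where "y \<in> support_set K s"
      using support_set_nonempty[OF K] by blast
    then obtain t' where "t' \<in> normals_supp K" "min t s \<le> t'" "t' \<le> max t s"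
      using normals_supp_between_support_points[OF K p] s(3) by metis
    then have "t' \<in> {a<..<b} \<inter> S"
      using normals s gap(2,3) by (auto simp: min_def max_def split: if_splits)
    then show False
      using gap(1) unfolding short_gap_def by blast
  qed
qed

lemma normals_supp_subset:
  assumes K: "convex_body K" and "closed S" and per: "\<forall>t. t \<in> S \<longleftrightarrow> t + 2 * pi \<in> S"
    and comp: "\<forall>C \<in> components (- S). bounded C \<and> Sup C - Inf C < pi"
    and eq: "K = (\<Inter>t\<in>S. tangent_halfplane K t)"
  shows "normals_supp K \<subseteq> S"
proof
  fix t
  assume t: "t \<in> normals_supp K"
  show "t \<in> S"
  proof (rule ccontr)
    assume "t \<notin> S"
    then obtain a b where gap: "short_gap S a b" "a < t" "t < b"
      using short_gap_around[OF \<open>closed S\<close> comp] by blast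
    define d where "d = min (t - a) (b - t)"
    have "0 < d"
      using gap by (simp add: d_def)
    have "surface_area_measure K {t - d<..<t + d} \<le> surface_area_measure K {a<..<b}"
      by (intro surface_area_measure_mono) (auto simp: d_def)
    also have "\<dots> = 0"
      using surface_area_measure_gap[OF K \<open>closed S\<close> per eq gap(1)] .
    finally show False
      using t \<open>0 < d\<close> unfolding normals_supp_def by (auto simp: not_less)
  qed
qed

theorem theoremA51:
  fixes Pi_set :: "real set"
  assumes "closed Pi_set"
    and "\<forall>t. t \<in> Pi_set \<longleftrightarrow> t + 2 * pi \<in> Pi_set"
    and "\<forall>C \<in> components (- Pi_set). bounded C \<and> Sup C - Inf C < pi"
  shows "\<forall>K. convex_body K \<longrightarrow>
           (K = (\<Inter>t\<in>Pi_set. tangent_halfplane K t) \<longleftrightarrow> normals_supp K \<subseteq> Pi_set)"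
proof (intro allI impI iffI)
  fix K
  assume K: "convex_body K"
  show "normals_supp K \<subseteq> Pi_set" if "K = (\<Inter>t\<in>Pi_set. tangent_halfplane K t)"
    using normals_supp_subset[OF K assms that] .
  show "K = (\<Inter>t\<in>Pi_set. tangent_halfplane K t)" if "normals_supp K \<subseteq> Pi_set"
    using subset_Inter_tangent_halfplane[OF K] Inter_tangent_halfplane_subset[OF K assms(1,3) that]
    by (rule subset_antisym)
qed

end
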